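(* Assume (R), let $(\mathbb P^n)_{n\ge1}\subset\mathcal P$ and suppose $\sup_n\mathbb E^{\mathbb P^n}[\int_0^1\lambda_1^n(t)\log\lambda_1^n(t)dt]<\infty$. Let $A^n_t:=\int_0^t\Sigma^{\mathbb P^n}_sds$. Then the laws of $A^n$ under $\mathbb P^n$, $n\ge1$, form a tight family in $\mathcal M_1(C([0,1];\mathbb S^d_+))$, where $C([0,1];\mathbb S^d_+)$ carries the uniform topology induced by any matrix norm.
   Context: $\Omega=C([0,1];\mathbb R^d)$ with canonical process $X$; $\mathcal P$ is the set of probability measures under which $X$ is a continuous local martingale with $\langle X\rangle_t=\int_0^t\Sigma^{\mathbb P}_sds$, $\Sigma^{\mathbb P}$ progressively measurable, $\mathbb S^d_+$-valued. $\bar\Sigma_2:[0,1]\times\mathbb R^d\to\mathbb S^d_{++}$, $\lambda_2$ continuous; (R): $\underline b\le\lambda_2\le\overline b$, $\bar\Sigma_2\preceq MI_d$ for constants $0<\underline b\le\overline b$, $M>0$. $\lambda_1^n(t):=\frac1d\mathrm{tr}(\bar\Sigma_2(t,X_t)^{-1}\Sigma^{\mathbb P^n}_t)$; convention $0\log0=0$. *)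

theory Defs
  imports "HOL-Analysis.Analysis" "HOL-Probability.Probability"
begin

text \<open>Paths: continuous maps [0,1] -> R^d, made canonical by requiring them to be
  extensional (undefined outside [0,1]).\<close>
definition path_set :: "(real \<Rightarrow> real^'d) set" where
  "path_set = {\<omega>. continuous_on {0..1} \<omega> \<and> \<omega> \<in> extensional {0..1}}"

definition Omega :: "(real \<Rightarrow> real^'d) measure" where
  "Omega = sigma path_set
     {{\<omega> \<in> path_set. \<omega> t \<in> B} | t B. t \<in> {0..1} \<and> B \<in> sets borel}"

definition Ffilt :: "real \<Rightarrow> (real \<Rightarrow> real^'d) measure" where
  "Ffilt t = sigma path_set
     {{\<omega> \<in> path_set. \<omega> s \<in> B} | s B. s \<in> {0..t} \<and> B \<in> sets borel}"

definition is_martingale :: "(real \<Rightarrow> real^'d) measure \<Rightarrow> (real \<Rightarrow> (real \<Rightarrow> real^'d) \<Rightarrow> real) \<Rightarrow> bool" where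
  "is_martingale P Y \<longleftrightarrow>
     (\<forall>t\<in>{0..1}. Y t \<in> borel_measurable (Ffilt t) \<and> integrable P (Y t)) \<and>
     (\<forall>s t B. 0 \<le> s \<longrightarrow> s \<le> t \<longrightarrow> t \<le> 1 \<longrightarrow> B \<in> sets (Ffilt s) \<longrightarrow>
        (\<integral>\<omega>. indicator B \<omega> * (Y t \<omega> - Y s \<omega>) \<partial>P) = 0)"

definition is_stopping_time :: "((real \<Rightarrow> real^'d) \<Rightarrow> real) \<Rightarrow> bool" where
  "is_stopping_time \<tau> \<longleftrightarrow>
     (\<forall>\<omega>\<in>path_set. \<tau> \<omega> \<in> {0..1}) \<and>
     (\<forall>t\<in>{0..1}. {\<omega> \<in> path_set. \<tau> \<omega> \<le> t} \<in> sets (Ffilt t))"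

definition is_cont_local_martingale :: "(real \<Rightarrow> real^'d) measure \<Rightarrow> (real \<Rightarrow> (real \<Rightarrow> real^'d) \<Rightarrow> real) \<Rightarrow> bool" where
  "is_cont_local_martingale P Y \<longleftrightarrow>
     (AE \<omega> in P. continuous_on {0..1} (\<lambda>t. Y t \<omega>)) \<and>
     Y 0 \<in> borel_measurable (Ffilt 0) \<and>
     (\<exists>\<tau> :: nat \<Rightarrow> (real \<Rightarrow> real^'d) \<Rightarrow> real.
        (\<forall>k. is_stopping_time (\<tau> k)) \<and>
        (\<forall>k. \<forall>\<omega>\<in>path_set. \<tau> k \<omega> \<le> \<tau> (Suc k) \<omega>) \<and>
        (AE \<omega> in P. \<exists>k. \<tau> k \<omega> = 1) \<and>
        (\<forall>k. is_martingale P (\<lambda>t \<omega>. Y (min t (\<tau> k \<omega>)) \<omega> - Y 0 \<omega>)))"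

definition psd_set :: "(real^'d^'d) set" where
  "psd_set = {A. transpose A = A \<and> (\<forall>v. 0 \<le> v \<bullet> (A *v v))}"

definition pd_set :: "(real^'d^'d) set" where
  "pd_set = {A. transpose A = A \<and> (\<forall>v. v \<noteq> 0 \<longrightarrow> 0 < v \<bullet> (A *v v))}"

definition int_cov :: "(real \<Rightarrow> (real \<Rightarrow> real^'d) \<Rightarrow> real^'d^'d) \<Rightarrow> real \<Rightarrow> (real \<Rightarrow> real^'d) \<Rightarrow> real^'d^'d" where
  "int_cov Sig t \<omega> = (LINT s:{0..t}|lborel. Sig s \<omega>)"

text \<open>P is in \<P> and Sig is (a version of) Sigma^P: X is a continuous local martingale
  with <X>_t = int_0^t Sig_s ds, characterised (as usual) by requiring
  X^i X^j - int_0^. Sig^{ij} ds to be a continuous local martingale.\<close>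
definition in_P_with :: "(real \<Rightarrow> real^'d) measure \<Rightarrow> (real \<Rightarrow> (real \<Rightarrow> real^'d) \<Rightarrow> real^'d^'d) \<Rightarrow> bool" where
  "in_P_with P Sig \<longleftrightarrow>
     prob_space P \<and> sets P = sets Omega \<and>
     (\<forall>t\<in>{0..1}. (\<lambda>(s,\<omega>). Sig s \<omega>) \<in> borel_measurable (restrict_space lborel {0..t} \<Otimes>\<^sub>M Ffilt t)) \<and>
     (\<forall>s\<in>{0..1}. \<forall>\<omega>\<in>path_set. Sig s \<omega> \<in> psd_set) \<and>
     (AE \<omega> in P. set_integrable lborel {0..1} (\<lambda>s. Sig s \<omega>)) \<and>
     (\<forall>i. is_cont_local_martingale P (\<lambda>t \<omega>. \<omega> t $ i)) \<and>
     (\<forall>i j. is_cont_local_martingale P (\<lambda>t \<omega>. \<omega> t $ i * \<omega> t $ j - int_cov Sig t \<omega> $ i $ j))"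

definition xlogx :: "real \<Rightarrow> real" where
  "xlogx x = (if x = 0 then 0 else x * ln x)"

definition lambda1 :: "(real \<Rightarrow> real^'d \<Rightarrow> real^'d^'d) \<Rightarrow> (real \<Rightarrow> (real \<Rightarrow> real^'d) \<Rightarrow> real^'d^'d) \<Rightarrow> real \<Rightarrow> (real \<Rightarrow> real^'d) \<Rightarrow> real" where
  "lambda1 Sbar2 Sig t \<omega> = trace (matrix_inv (Sbar2 t (\<omega> t)) ** Sig t \<omega>) / real CARD('d)"

definition CS_metric :: "(real \<Rightarrow> real^'d^'d) metric" where
  "CS_metric = cfunspace (top_of_set {0..1}) (submetric euclidean_metric psd_set)"

end

theory Submission
  imports Defs "HOL-Complex_Analysis.Great_Picard"
begin

text \<open>
  For positive semidefinite \<open>\<Sigma>\<close> and \<open>Sbar2 \<preceq> M I\<close> one has \<open>Sbar2\<^sup>-\<^sup>1 \<succeq> I/M\<close>, hence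
  \<open>|\<Sigma>| \<le> d tr \<Sigma> \<le> d\<^sup>2 M \<lambda>\<^sub>1\<close>. With \<open>c = d\<^sup>2 M\<close> and \<open>\<psi>(y) = (y log y)\<^sup>+\<close>, the entropy
  hypothesis therefore bounds \<open>E\<^sup>n \<integral>\<^sub>0\<^sup>1 \<psi>(|\<Sigma>\<^sub>s|/c) ds\<close> uniformly in \<open>n\<close>. Since
  \<open>y \<le> e\<^sup>m + \<psi>(y)/m\<close> for \<open>m \<ge> 1\<close>, on the event \<open>\<integral>\<^sub>0\<^sup>1 \<psi>(|\<Sigma>\<^sub>s|/c) ds \<le> R\<close> the path \<open>A\<close>
  is positive semidefinite, bounded by \<open>c(e + R)\<close> and satisfies
  \<open>|A\<^sub>t - A\<^sub>s| \<le> c(|t - s| e\<^sup>m + R/m)\<close> for all \<open>m \<ge> 1\<close>. These paths are uniformly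
  equicontinuous and form a compact set by Arzela-Ascoli, and by Markov's inequality the
  complementary event has probability at most \<open>sup\<^sub>n E\<^sup>n[\<dots>]/R\<close>, which is small for large \<open>R\<close>.
\<close>

section \<open>Positive semidefinite matrices\<close>

lemma psd_quadratic_nonneg: "A \<in> psd_set \<Longrightarrow> 0 \<le> v \<bullet> (A *v v)"
  by (simp add: psd_set_def)

lemma psd_transpose: "A \<in> psd_set \<Longrightarrow> transpose A = A"
  by (simp add: psd_set_def)

lemma psd_entry_sym: "A \<in> psd_set \<Longrightarrow> A$i$j = A$j$i"
  using arg_cong[of _ _ "\<lambda>B. B$j$i", OF psd_transpose] by (simp add: transpose_def)

lemma zero_psd: "0 \<in> psd_set"
  by (simp add: psd_set_def transpose_def vec_eq_iff)

lemma pd_imp_psd: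
  assumes "S \<in> pd_set" shows "S \<in> psd_set"
proof -
  have "0 \<le> v \<bullet> (S *v v)" for v
    using assms by (cases "v = 0") (auto simp: pd_set_def intro: less_imp_le)
  with assms show ?thesis by (simp add: pd_set_def psd_set_def)
qed

lemma axis_inner_matrix_axis: "axis i (1::real) \<bullet> ((A::real^'n^'n) *v axis j 1) = A$i$j"
  by (simp add: inner_axis' matrix_vector_mult_basis column_def)

lemma inner_symmetric_matrix:
  fixes S :: "real^'n^'n"
  assumes "transpose S = S"
  shows "x \<bullet> (S *v y) = y \<bullet> (S *v x)"
proof -
  have "x \<bullet> (S *v y) = (transpose S *v x) \<bullet> y"
    by (simp add: dot_lmul_matrix)
  then show ?thesis using assms by (simp add: inner_commute)
qed

lemma psd_cauchy_schwarz:
  fixes S :: "real^'n^'n"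
  assumes "S \<in> psd_set"
  shows "(x \<bullet> (S *v y))^2 \<le> (x \<bullet> (S *v x)) * (y \<bullet> (S *v y))"
proof -
  define a b c where "a = x \<bullet> (S *v x)" and "b = x \<bullet> (S *v y)" and "c = y \<bullet> (S *v y)"
  have quadratic: "0 \<le> a + 2 * t * b + t\<^sup>2 * c" for t
  proof -
    have "0 \<le> (x + t *\<^sub>R y) \<bullet> (S *v (x + t *\<^sub>R y))"
      using psd_quadratic_nonneg[OF assms] by blast
    also have "\<dots> = a + 2 * t * b + t\<^sup>2 * c"
      using inner_symmetric_matrix[OF psd_transpose[OF assms], of x y]
      by (simp add: a_def b_def c_def matrix_vector_right_distrib inner_add_left inner_add_right
          matrix_vector_mult_scaleR power2_eq_square algebra_simps)
    finally show ?thesis .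
  qed
  have "b\<^sup>2 \<le> a * c"
  proof (cases "c = 0")
    case True
    have "b = 0"
    proof (rule ccontr)
      assume "b \<noteq> 0"
      from quadratic[of "- (a + 1) / (2 * b)"] \<open>b \<noteq> 0\<close> True show False
        by (simp add: field_simps)
    qed
    with True show ?thesis by simp
  next
    case False
    then have "0 < c" using psd_quadratic_nonneg[OF assms] by (simp add: c_def order_less_le)
    with quadratic[of "- b / c"] show ?thesis
      by (simp add: field_simps power2_eq_square)
  qed
  then show ?thesis by (simp add: a_def b_def c_def)
qed

lemma psd_entry_sq_le:
  assumes "A \<in> psd_set" shows "(A$i$j)\<^sup>2 \<le> A$i$i * A$j$j"
  using psd_cauchy_schwarz[OF assms, of "axis i 1" "axis j 1"] by (simp add: axis_inner_matrix_axis)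

lemma psd_diag_nonneg: "A \<in> psd_set \<Longrightarrow> 0 \<le> A$i$i"
  using psd_quadratic_nonneg[of A "axis i 1"] by (simp add: axis_inner_matrix_axis)

lemma psd_entry_abs_le:
  assumes "A \<in> psd_set" shows "\<bar>A$i$j\<bar> \<le> (A$i$i + A$j$j) / 2"
proof -
  have "\<bar>A$i$j\<bar> \<le> sqrt (A$i$i * A$j$j)"
    using real_sqrt_le_mono[OF psd_entry_sq_le[OF assms]] by simp
  also have "\<dots> \<le> (A$i$i + A$j$j) / 2"
    using arith_geo_mean_sqrt[OF psd_diag_nonneg[OF assms] psd_diag_nonneg[OF assms]] .
  finally show ?thesis .
qed

lemma psd_norm_le_trace:
  fixes A :: "real^'n^'n"
  assumes "A \<in> psd_set" shows "norm A \<le> CARD('n) * trace A"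
proof -
  have "norm A \<le> (\<Sum>i\<in>UNIV. norm (A$i))" unfolding norm_vec_def by (rule L2_set_le_sum) simp
  also have "\<dots> \<le> (\<Sum>i\<in>UNIV. \<Sum>j\<in>UNIV. \<bar>A$i$j\<bar>)"
    by (intro sum_mono norm_le_l1_cart)
  also have "\<dots> \<le> (\<Sum>i\<in>UNIV. \<Sum>j\<in>UNIV. (A$i$i + A$j$j) / 2)"
    by (intro sum_mono psd_entry_abs_le[OF assms])
  also have "\<dots> = CARD('n) * trace A"
    by (simp add: trace_def sum.distrib add_divide_distrib sum_divide_distrib[symmetric]
        sum_distrib_left[symmetric])
  finally show ?thesis .
qed

lemma closed_psd: "closed (psd_set :: (real^'n^'n) set)"
proof -
  have "psd_set = (\<Inter>i j. {A::real^'n^'n. A$i$j = A$j$i}) \<inter> (\<Inter>v. {A. 0 \<le> v \<bullet> (A *v v)})"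
    by (auto simp: psd_set_def vec_eq_iff transpose_def)
  also have "closed \<dots>"
  proof (intro closed_Int closed_INT ballI)
    fix i j show "closed {A::real^'n^'n. A$i$j = A$j$i}"
      by (intro closed_Collect_eq continuous_intros)
  next
    fix v :: "real^'n"
    have "continuous_on UNIV (\<lambda>A::real^'n^'n. v \<bullet> (A *v v))"
      by (simp add: inner_vec_def matrix_vector_mult_def sum_distrib_left continuous_intros)
    then show "closed {A::real^'n^'n. 0 \<le> v \<bullet> (A *v v)}"
      by (intro closed_Collect_le) (auto intro: continuous_intros)
  qed
  finally show ?thesis .
qed

definition outer :: "real^'n \<Rightarrow> real^'n^'n" where
  "outer u = (\<chi> k l. u$k * u$l)"

lemma trace_mult_outer: "trace (C ** outer u) = u \<bullet> (C *v u)"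
  by (simp add: trace_def outer_def matrix_matrix_mult_def matrix_vector_mult_def inner_vec_def
      sum_distrib_left mult_ac)

lemma inner_outer_vector: "v \<bullet> (outer u *v v) = (u \<bullet> v)\<^sup>2"
  by (simp add: outer_def matrix_vector_mult_def inner_vec_def power2_eq_square
      sum_distrib_left sum_distrib_right mult_ac)

lemma psd_sub_outer_column:
  fixes A :: "real^'n^'n"
  assumes psd: "A \<in> psd_set" and pos: "0 < A$i$i"
  defines "B \<equiv> A - (1 / A$i$i) *\<^sub>R outer (column i A)"
  shows "B \<in> psd_set" and "B$i$j = 0"
proof -
  have col: "column i A \<bullet> v = (A *v v)$i" for v
    by (simp add: column_def inner_vec_def matrix_vector_mult_def
        psd_entry_sym[OF psd, of _ i] mult.commute)
  have "(column i A \<bullet> v)\<^sup>2 \<le> A$i$i * (v \<bullet> (A *v v))" for v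
    using psd_cauchy_schwarz[OF psd, of "axis i 1" v] unfolding col
    by (simp add: inner_axis' matrix_vector_mult_basis column_def)
  moreover have "v \<bullet> (B *v v) = v \<bullet> (A *v v) - (column i A \<bullet> v)\<^sup>2 / A$i$i" for v
    by (simp add: B_def matrix_vector_mult_diff_rdistrib inner_diff_right
        scaleR_matrix_vector_assoc[symmetric] inner_outer_vector)
  ultimately have "0 \<le> v \<bullet> (B *v v)" for v
    using pos by (simp add: pos_divide_le_eq mult.commute)
  moreover have "transpose B = B"
    using psd_entry_sym[OF psd]
    by (simp add: B_def vec_eq_iff transpose_def outer_def column_def mult.commute)
  ultimately show "B \<in> psd_set" by (simp add: psd_set_def)
  show "B$i$j = 0"
    using pos by (simp add: B_def outer_def column_def psd_entry_sym[OF psd, of j i])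
qed

lemma trace_mult_diff_scaleR:
  fixes A B C :: "real^'n^'n"
  shows "trace (C ** (A - r *\<^sub>R B)) = trace (C ** A) - r * trace (C ** B)"
    and "trace ((A - r *\<^sub>R B) ** C) = trace (A ** C) - r * trace (B ** C)"
  by (simp_all add: trace_def matrix_matrix_mult_def sum_subtractf sum_distrib_left
      right_diff_distrib left_diff_distrib mult.left_commute mult.assoc)

text \<open>There is no spectral theorem for \<^typ>\<open>real^'n^'n\<close> in the library; instead \<open>A\<close> is
  peeled into rank-one pieces \<open>u u\<^sup>T\<close> as in a Cholesky decomposition (induction over the
  rows not yet cleared), each piece contributing \<open>u \<bullet> C u \<ge> 0\<close> to the trace.\<close>
lemma trace_mult_psd_nonneg:
  fixes C :: "real^'n^'n"
  assumes C: "\<And>u. 0 \<le> u \<bullet> (C *v u)" and A: "A \<in> psd_set"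
  shows "0 \<le> trace (C ** A)"
proof -
  have "finite S \<Longrightarrow> A \<in> psd_set \<Longrightarrow> \<forall>k j. k \<notin> S \<longrightarrow> A$k$j = 0 \<Longrightarrow> 0 \<le> trace (C ** A)"
    for S and A :: "real^'n^'n"
  proof (induction S arbitrary: A rule: finite_induct)
    case empty
    then have "A = 0" by (simp add: vec_eq_iff)
    then show ?case by (simp add: trace_def)
  next
    case (insert i S)
    show ?case
    proof (cases "A$i$i = 0")
      case True
      then have row_i: "A$i$j = 0" for j
        using psd_entry_sq_le[OF insert.prems(1), of i j] by simp
      have "\<forall>k j. k \<notin> S \<longrightarrow> A$k$j = 0"
        using row_i insert.prems(2) by (metis insert_iff)
      then show ?thesis by (rule insert.IH[OF insert.prems(1)])
    next
      case False
      then have pos: "0 < A$i$i" using psd_diag_nonneg[OF insert.prems(1), of i] by simp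
      define B where "B = A - (1 / A$i$i) *\<^sub>R outer (column i A)"
      have B: "B \<in> psd_set"
        unfolding B_def by (rule psd_sub_outer_column(1)[OF insert.prems(1) pos])
      have row_i: "B$i$j = 0" for j
        unfolding B_def by (rule psd_sub_outer_column(2)[OF insert.prems(1) pos])
      have "B$k$j = 0" if "k \<notin> insert i S" for k j
        using insert.prems(2) that by (simp add: B_def outer_def column_def)
      with row_i have "\<forall>k j. k \<notin> S \<longrightarrow> B$k$j = 0"
        by (metis insert_iff)
      then have "0 \<le> trace (C ** B)" by (rule insert.IH[OF B])
      moreover have "0 \<le> (1 / A$i$i) * (column i A \<bullet> (C *v column i A))"
        using C pos by simp
      moreover have "trace (C ** A) = trace (C ** B) + (1 / A$i$i) * (column i A \<bullet> (C *v column i A))"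
        by (simp add: B_def trace_mult_diff_scaleR trace_mult_outer)
      ultimately show ?thesis by linarith
    qed
  qed
  from this[of UNIV A] A show ?thesis by simp
qed

lemma pd_invertible:
  fixes S :: "real^'n^'n"
  assumes "S \<in> pd_set" shows "invertible S"
proof -
  have "x = 0" if "S *v x = 0" for x
    using assms that by (cases "x = 0") (auto simp: pd_set_def)
  then show ?thesis by (auto simp: invertible_left_inverse matrix_left_invertible_ker)
qed

lemma matrix_inv_right: "invertible S \<Longrightarrow> S ** matrix_inv S = mat 1"
  unfolding invertible_def matrix_inv_def by (rule conjunct1[OF someI_ex])

lemma pd_inverse_quadratic_lower:
  fixes S :: "real^'n^'n"
  assumes pd: "S \<in> pd_set" and le_M: "\<And>v. v \<bullet> (S *v v) \<le> M * (v \<bullet> v)" and M: "0 < M"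
  shows "(u \<bullet> u) / M \<le> u \<bullet> (matrix_inv S *v u)"
proof -
  have psd: "S \<in> psd_set" using pd by (rule pd_imp_psd)
  define w where "w = matrix_inv S *v u"
  have Sw: "S *v w = u"
    using matrix_inv_right[OF pd_invertible[OF pd]] by (simp add: w_def matrix_vector_mul_assoc)
  have "w \<bullet> (S *v u) = u \<bullet> u" and "w \<bullet> (S *v w) = u \<bullet> w"
    using inner_symmetric_matrix[OF psd_transpose[OF psd], of w u] by (simp_all add: Sw inner_commute)
  then have "(u \<bullet> u)\<^sup>2 \<le> (u \<bullet> w) * (u \<bullet> (S *v u))"
    using psd_cauchy_schwarz[OF psd, of w u] by simp
  also have "\<dots> \<le> (u \<bullet> w) * (M * (u \<bullet> u))"
    using le_M psd_quadratic_nonneg[OF psd, of w] \<open>w \<bullet> (S *v w) = u \<bullet> w\<close>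
    by (intro mult_left_mono) auto
  finally have "(u \<bullet> u) * (u \<bullet> u) \<le> (M * (u \<bullet> w)) * (u \<bullet> u)"
    by (simp add: power2_eq_square mult_ac)
  then have "u \<bullet> u \<le> M * (u \<bullet> w)"
    using psd_quadratic_nonneg[OF psd, of w] \<open>w \<bullet> (S *v w) = u \<bullet> w\<close> M
    by (cases "u = 0") (simp_all add: mult_le_cancel_right)
  then show ?thesis using M by (simp add: w_def divide_le_eq mult.commute)
qed

lemma psd_norm_le_trace_pd_inverse:
  fixes S A :: "real^'n^'n" and M :: real
  assumes "S \<in> pd_set" "\<And>v. v \<bullet> (S *v v) \<le> M * (v \<bullet> v)" "0 < M" "A \<in> psd_set"
  shows "norm A \<le> CARD('n) * M * trace (matrix_inv S ** A)"
proof -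
  have "0 \<le> u \<bullet> ((matrix_inv S - (1 / M) *\<^sub>R mat 1) *v u)" for u
    using pd_inverse_quadratic_lower[OF assms(1-3), of u]
    by (simp add: matrix_vector_mult_diff_rdistrib inner_diff_right
        scaleR_matrix_vector_assoc[symmetric])
  from trace_mult_psd_nonneg[OF this assms(4)]
  have "trace A \<le> M * trace (matrix_inv S ** A)"
    using assms(3) by (simp add: trace_mult_diff_scaleR field_simps)
  have "norm A \<le> CARD('n) * trace A"
    by (rule psd_norm_le_trace[OF assms(4)])
  also have "\<dots> \<le> CARD('n) * (M * trace (matrix_inv S ** A))"
    using \<open>trace A \<le> _\<close> by (intro mult_left_mono) simp_all
  finally show ?thesis
    by (simp add: mult.assoc)
qed

section \<open>The positive part of \<open>x log x\<close>\<close>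

definition xlogx_plus :: "real \<Rightarrow> real" where
  "xlogx_plus y = max 0 (xlogx y)"

lemma xlogx_plus_nonneg: "0 \<le> xlogx_plus y"
  by (simp add: xlogx_plus_def)

lemma xlogx_plus_eq: "1 \<le> y \<Longrightarrow> xlogx_plus y = y * ln y"
  by (simp add: xlogx_plus_def xlogx_def)

lemma xlogx_plus_eq_0: "0 \<le> y \<Longrightarrow> y \<le> 1 \<Longrightarrow> xlogx_plus y = 0"
  by (auto simp: xlogx_plus_def xlogx_def mult_nonneg_nonpos)

lemma xlogx_plus_mono:
  assumes "0 \<le> y" "y \<le> z" shows "xlogx_plus y \<le> xlogx_plus z"
proof (cases "y \<le> 1")
  case True then show ?thesis using xlogx_plus_eq_0[OF assms(1)] xlogx_plus_nonneg by simp
next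
  case False
  with assms have "1 \<le> y" "1 \<le> z" by auto
  moreover have "y * ln y \<le> z * ln z"
    using \<open>1 \<le> y\<close> assms(2) by (intro mult_mono) auto
  ultimately show ?thesis by (simp add: xlogx_plus_eq)
qed

lemma xlogx_ge_neg_exp: assumes "0 \<le> y" shows "- exp (-1) \<le> xlogx y"
proof (cases "y = 0")
  case False
  with assms have y: "0 < y" by simp
  have "ln (exp (-1) / y) \<le> exp (-1) / y - 1"
    using y by (intro ln_le_minus_one) simp
  then have "- ln y \<le> exp (-1) / y"
    using y by (simp add: ln_div)
  then have "y * - ln y \<le> exp (-1)"
    using y by (simp add: field_simps)
  then show ?thesis by (simp add: xlogx_def)
qed (simp add: xlogx_def)

lemma xlogx_plus_le: "0 \<le> y \<Longrightarrow> xlogx_plus y \<le> xlogx y + exp (-1)"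
  using xlogx_ge_neg_exp[of y] by (simp add: xlogx_plus_def)

lemma le_exp_plus_xlogx_plus:
  assumes m: "1 \<le> m" and y: "0 \<le> y" shows "y \<le> exp m + xlogx_plus y / m"
proof (cases "y \<le> exp m")
  case True then show ?thesis using xlogx_plus_nonneg[of y] m by (simp add: add_increasing2)
next
  case False
  have "1 \<le> exp m" using m by simp
  with False have y1: "1 \<le> y" by linarith
  from False have "m < ln y"
    using y1 by (metis exp_less_cancel_iff exp_ln_iff less_le_trans not_le zero_less_one)
  then have "y * m \<le> y * ln y" using y1 by (intro mult_left_mono) auto
  then have "y \<le> xlogx_plus y / m" using m y1 by (simp add: xlogx_plus_eq field_simps)
  then show ?thesis by (simp add: add_increasing)
qed

lemma borel_measurable_xlogx_plus [measurable]: "xlogx_plus \<in> borel_measurable borel"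
  unfolding xlogx_plus_def[abs_def] xlogx_def[abs_def] by measurable

section \<open>A compact set of paths\<close>

text \<open>The modulus parameter \<open>m \<ge> 1\<close> is written \<open>Suc m\<close>; quantifying over natural rather
  than real \<open>m\<close> keeps the event \<open>{A \<in> K}\<close> determined by countably many conditions.\<close>
definition controlled_on :: "real set \<Rightarrow> real \<Rightarrow> real \<Rightarrow> real \<Rightarrow> (real \<Rightarrow> real^'n^'n) \<Rightarrow> bool" where
  "controlled_on T c R B f \<longleftrightarrow>
     (\<forall>t\<in>T. f t \<in> psd_set \<and> norm (f t) \<le> B) \<and>
     (\<forall>s\<in>T. \<forall>t\<in>T. \<forall>m. norm (f t - f s) \<le> c * (\<bar>t - s\<bar> * exp (Suc m) + R / Suc m))"

definition controlled_paths :: "real \<Rightarrow> real \<Rightarrow> real \<Rightarrow> (real \<Rightarrow> real^'n^'n) set" where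
  "controlled_paths c R B = {f \<in> extensional {0..1}. controlled_on {0..1} c R B f}"

lemma controlled_on_subset: "T' \<subseteq> T \<Longrightarrow> controlled_on T c R B f \<Longrightarrow> controlled_on T' c R B f"
  unfolding controlled_on_def by blast

lemma controlled_on_restrict: "controlled_on T c R B (restrict f T) = controlled_on T c R B f"
  unfolding controlled_on_def by simp

lemma controlled_on_uniform_modulus:
  assumes c: "0 < c" and e: "0 < e"
  obtains d where "0 < d"
    "\<And>f x y. controlled_on T c R B f \<Longrightarrow> x \<in> T \<Longrightarrow> y \<in> T \<Longrightarrow> \<bar>x - y\<bar> < d \<Longrightarrow> norm (f x - f y) < e"
proof -
  obtain n :: nat where "2 * c * R / e < n"
    using reals_Archimedean2 by blast
  then have cRm: "c * (R / Suc n) < e / 2" using e by (simp add: field_simps)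
  define d where "d = e / (2 * c * exp (Suc n))"
  show ?thesis
  proof (rule that)
    show "0 < d" using c e by (simp add: d_def)
    fix f x y assume f: "controlled_on T c R B f" and "x \<in> T" "y \<in> T" and xy: "\<bar>x - y\<bar> < d"
    then have "norm (f x - f y) \<le> c * (\<bar>x - y\<bar> * exp (Suc n)) + c * (R / Suc n)"
      by (simp add: controlled_on_def distrib_left del: of_nat_Suc)
    also have "c * (\<bar>x - y\<bar> * exp (Suc n)) < c * (d * exp (Suc n))"
      using c xy by simp
    also have "c * (d * exp (Suc n)) = e / 2" using c by (simp add: d_def)
    finally show "norm (f x - f y) < e" using cRm by linarith
  qed
qed

lemma controlled_on_continuous_on:
  assumes "0 < c" "controlled_on T c R B f" shows "continuous_on T f"
  unfolding continuous_on_iff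
proof (intro ballI allI impI)
  fix x e :: real assume "x \<in> T" "0 < e"
  obtain d where "0 < d" and d: "\<And>(f :: real \<Rightarrow> real^'a^'a) x y. controlled_on T c R B f \<Longrightarrow>
      x \<in> T \<Longrightarrow> y \<in> T \<Longrightarrow> \<bar>x - y\<bar> < d \<Longrightarrow> norm (f x - f y) < e"
    using controlled_on_uniform_modulus[OF assms(1) \<open>0 < e\<close>] by blast
  show "\<exists>d>0. \<forall>y\<in>T. dist y x < d \<longrightarrow> dist (f y) (f x) < e"
    using \<open>0 < d\<close> d[OF assms(2) _ \<open>x \<in> T\<close>] by (auto simp: dist_norm)
qed

lemma controlled_on_limit:
  assumes g: "\<And>k. controlled_on S c R B (g k)" and u: "\<And>k t. t \<in> T \<Longrightarrow> u k t \<in> S"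
    and u_lim: "\<And>t. t \<in> T \<Longrightarrow> (\<lambda>k. u k t) \<longlonglongrightarrow> t"
    and g_lim: "\<And>t. t \<in> T \<Longrightarrow> (\<lambda>k. g k (u k t)) \<longlonglongrightarrow> f t"
  shows "controlled_on T c R B f"
  unfolding controlled_on_def
proof (intro conjI ballI allI impI)
  fix t assume t: "t \<in> T"
  show "f t \<in> psd_set"
    by (rule closed_sequentially[OF closed_psd _ g_lim[OF t]]) (use g u t in \<open>auto simp: controlled_on_def\<close>)
  show "norm (f t) \<le> B"
    by (rule LIMSEQ_le_const2[OF tendsto_norm[OF g_lim[OF t]]]) (use g u t in \<open>auto simp: controlled_on_def\<close>)
next
  fix s t m assume s: "s \<in> T" and t: "t \<in> T"
  define \<rho> where "\<rho> r = c * (r * exp (Suc m) + R / Suc m)" for r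
  show "norm (f t - f s) \<le> \<rho> \<bar>t - s\<bar>"
  proof (rule LIMSEQ_le)
    show "(\<lambda>k. norm (g k (u k t) - g k (u k s))) \<longlonglongrightarrow> norm (f t - f s)"
      by (intro tendsto_intros g_lim s t)
    show "(\<lambda>k. \<rho> \<bar>u k t - u k s\<bar>) \<longlonglongrightarrow> \<rho> \<bar>t - s\<bar>"
      unfolding \<rho>_def by (intro tendsto_intros u_lim s t)
    show "\<exists>N. \<forall>k\<ge>N. norm (g k (u k t) - g k (u k s)) \<le> \<rho> \<bar>u k t - u k s\<bar>"
      using g u s t by (auto simp: controlled_on_def \<rho>_def)
  qed
qed

lemma controlled_paths_subset_mspace:
  assumes "0 < c"
  shows "controlled_paths c R B \<subseteq> mspace CS_metric"
proof
  fix f :: "real \<Rightarrow> real^'n^'n" assume "f \<in> controlled_paths c R B"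
  then have ext: "f \<in> extensional {0..1}" and f: "controlled_on {0..1} c R B f"
    by (auto simp: controlled_paths_def)
  interpret psd: Metric_space "psd_set :: (real^'n^'n) set" dist
    using Metric_space_mspace_mdist[of "submetric euclidean_metric psd_set"] by simp
  have "f ` {0..1} \<subseteq> psd.mcball 0 B"
    using f zero_psd by (auto simp: controlled_on_def psd.mcball_def dist_norm)
  then have "psd.mbounded (f ` {0..1})"
    by (auto simp: psd.mbounded_def)
  with f ext controlled_on_continuous_on[OF assms f] show "f \<in> mspace CS_metric"
    by (auto simp: CS_metric_def mtopology_of_submetric continuous_map_in_subtopology
        continuous_map_iff_continuous Pi_iff controlled_on_def)
qed

lemma limitin_CS_metric_uniform:
  assumes "\<And>k. f k \<in> mspace CS_metric" "l \<in> mspace CS_metric"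
    and unif: "\<forall>e>0. \<exists>N. \<forall>k\<ge>N. \<forall>x\<in>{0..1}. norm (f k x - l x) < e"
  shows "limitin (mtopology_of CS_metric) f l sequentially"
  unfolding mtopology_of_def Metric_space.limitin_metric[OF Metric_space_mspace_mdist]
proof (intro conjI allI impI)
  fix e :: real assume "0 < e"
  then have "e / 2 > 0"
    by simp
  with unif obtain N where N: "\<forall>k\<ge>N. \<forall>x\<in>{0..1}. norm (f k x - l x) < e / 2"
    by blast
  have "mdist CS_metric (f k) l < e" if "N \<le> k" for k
  proof -
    have "mdist CS_metric (f k) l \<le> e / 2"
      unfolding CS_metric_def
    proof (rule mdist_cfunspace_le)
      fix x assume "x \<in> topspace (top_of_set {0..1::real})"
      with N that show "mdist (submetric euclidean_metric psd_set) (f k x) (l x) \<le> e / 2"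
        by (auto simp: dist_norm less_imp_le)
    qed (use \<open>0 < e\<close> in simp)
    with \<open>0 < e\<close> show ?thesis
      by linarith
  qed
  with assms(1) show "\<forall>\<^sub>F k in sequentially. f k \<in> mspace CS_metric \<and> mdist CS_metric (f k) l < e"
    unfolding eventually_sequentially by blast
qed (use assms(2) in simp)

lemma controlled_paths_uniform_subseq:
  fixes \<sigma> :: "nat \<Rightarrow> real \<Rightarrow> real^'n^'n"
  assumes c: "0 < c" and \<sigma>: "\<And>k. \<sigma> k \<in> controlled_paths c R B"
  shows "\<exists>l r. l \<in> controlled_paths c R B \<and> strict_mono (r :: nat \<Rightarrow> nat) \<and>
    (\<forall>e>0. \<exists>N. \<forall>k\<ge>N. \<forall>x\<in>{0..1}. norm (\<sigma> (r k) x - l x) < e)"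
proof -
  have \<sigma>_on: "controlled_on {0..1} c R B (\<sigma> k)" for k
    using \<sigma> by (simp add: controlled_paths_def)
  obtain g r where r: "strict_mono (r :: nat \<Rightarrow> nat)"
    and unif: "\<And>e. 0 < e \<Longrightarrow> \<exists>N. \<forall>k x. k \<ge> N \<and> x \<in> {0..1} \<longrightarrow> norm (\<sigma> (r k) x - g x) < e"
  proof (rule Arzela_Ascoli[of "{0..1}" \<sigma> B])
    show "compact {0..1::real}" by simp
    show "norm (\<sigma> k x) \<le> B" if "x \<in> {0..1}" for k x
      using \<sigma>_on[of k] that by (auto simp: controlled_on_def)
    fix x e :: real assume "x \<in> {0..1}" "0 < e"
    obtain d where "0 < d" "\<And>(f :: real \<Rightarrow> real^'n^'n) x y. controlled_on {0..1} c R B f \<Longrightarrow>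
        x \<in> {0..1} \<Longrightarrow> y \<in> {0..1} \<Longrightarrow> \<bar>x - y\<bar> < d \<Longrightarrow> norm (f x - f y) < e"
      using controlled_on_uniform_modulus[OF c \<open>0 < e\<close>] by blast
    then show "\<exists>d>0. \<forall>k y. y \<in> {0..1} \<and> norm (x - y) < d \<longrightarrow> norm (\<sigma> k x - \<sigma> k y) < e"
      using \<sigma>_on \<open>x \<in> {0..1}\<close> by (intro exI[of _ d]) auto
  qed blast
  define l where "l = restrict g {0..1}"
  have unif_l: "\<exists>N. \<forall>k\<ge>N. \<forall>x\<in>{0..1}. norm (\<sigma> (r k) x - l x) < e" if e: "0 < e" for e
  proof -
    obtain N where "\<forall>k x. k \<ge> N \<and> x \<in> {0..1} \<longrightarrow> norm (\<sigma> (r k) x - g x) < e"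
      using unif[OF e] by blast
    then show ?thesis
      by (intro exI[of _ N]) (simp add: l_def)
  qed
  have lim: "(\<lambda>k. \<sigma> (r k) t) \<longlonglongrightarrow> l t" if "t \<in> {0..1}" for t
  proof (rule LIMSEQ_I)
    fix e :: real assume "0 < e"
    then obtain N where "\<forall>k\<ge>N. \<forall>x\<in>{0..1}. norm (\<sigma> (r k) x - l x) < e"
      using unif_l by blast
    with that show "\<exists>N. \<forall>k\<ge>N. norm (\<sigma> (r k) t - l t) < e"
      by (intro exI[of _ N]) simp
  qed
  have "controlled_on {0..1} c R B l"
    by (rule controlled_on_limit[where g="\<lambda>k. \<sigma> (r k)" and u="\<lambda>k t. t" and S="{0..1}"])
      (simp_all add: \<sigma>_on lim)
  then have "l \<in> controlled_paths c R B"
    by (simp add: controlled_paths_def l_def)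
  with r unif_l show ?thesis
    by blast
qed

lemma compactin_controlled_paths:
  assumes c: "0 < c"
  shows "compactin (mtopology_of CS_metric) (controlled_paths c R B)"
  unfolding mtopology_of_def Metric_space.compactin_sequentially[OF Metric_space_mspace_mdist]
proof (intro conjI allI impI)
  show sub: "controlled_paths c R B \<subseteq> mspace CS_metric"
    by (rule controlled_paths_subset_mspace[OF c])
  fix \<sigma> :: "nat \<Rightarrow> real \<Rightarrow> real^'n^'n" assume "range \<sigma> \<subseteq> controlled_paths c R B"
  then have \<sigma>: "\<sigma> k \<in> controlled_paths c R B" for k
    by auto
  obtain l r where l: "l \<in> controlled_paths c R B" and r: "strict_mono (r :: nat \<Rightarrow> nat)"
    and unif: "\<forall>e>0. \<exists>N. \<forall>k\<ge>N. \<forall>x\<in>{0..1}. norm (\<sigma> (r k) x - l x) < e"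
    using controlled_paths_uniform_subseq[where \<sigma> = \<sigma>, OF c \<sigma>] by blast
  have "limitin (mtopology_of CS_metric) (\<sigma> \<circ> r) l sequentially"
  proof (rule limitin_CS_metric_uniform)
    show "(\<sigma> \<circ> r) k \<in> mspace CS_metric" for k
      using \<sigma> sub by auto
    show "l \<in> mspace CS_metric"
      using l sub by auto
  qed (use unif in simp)
  with l r show "\<exists>l r. l \<in> controlled_paths c R B \<and> strict_mono r \<and>
      limitin (Metric_space.mtopology (mspace CS_metric) (mdist CS_metric)) (\<sigma> \<circ> r) l sequentially"
    unfolding mtopology_of_def by blast
qed

section \<open>Indefinite integrals of matrix-valued functions\<close>

lemma integral_psd:
  fixes H :: "'a \<Rightarrow> real^'n^'n"
  assumes int: "integrable M H" and psd: "\<And>x. x \<in> space M \<Longrightarrow> H x \<in> psd_set"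
  shows "integral\<^sup>L M H \<in> psd_set"
proof -
  have sym: "(integral\<^sup>L M H)$i$j = (integral\<^sup>L M H)$j$i" for i j
  proof -
    have "bounded_linear (\<lambda>A::real^'n^'n. A$i$j - A$j$i)"
      by (intro bounded_linear_sub bounded_linear_compose[OF bounded_linear_vec_nth bounded_linear_vec_nth])
    from integral_bounded_linear[OF this int]
    have "(integral\<^sup>L M H)$i$j - (integral\<^sup>L M H)$j$i = (\<integral>x. H x $ i $ j - H x $ j $ i \<partial>M)"
      by simp
    also have "\<dots> = (\<integral>x. 0 \<partial>M)"
      by (rule Bochner_Integration.integral_cong) (use psd psd_entry_sym in auto)
    finally show ?thesis by simp
  qed
  have "0 \<le> v \<bullet> (integral\<^sup>L M H *v v)" for v
  proof -
    have "bounded_linear (\<lambda>A::real^'n^'n. v \<bullet> (A *v v))"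
      by (rule linear_conv_bounded_linear[THEN iffD1], rule linearI)
        (simp_all add: matrix_vector_mult_add_rdistrib inner_add_right scaleR_matrix_vector_assoc[symmetric])
    from integral_bounded_linear[OF this int]
    have "v \<bullet> (integral\<^sup>L M H *v v) = (\<integral>x. v \<bullet> (H x *v v) \<partial>M)"
      by simp
    also have "0 \<le> \<dots>"
      using psd psd_quadratic_nonneg by (intro integral_nonneg_AE AE_I2) auto
    finally show ?thesis .
  qed
  with sym show ?thesis
    by (simp add: psd_set_def transpose_def vec_eq_iff)
qed

lemma nn_integral_norm_le_entropy:
  fixes F :: "real \<Rightarrow> 'a::real_normed_vector"
  assumes meas: "F \<in> borel_measurable (restrict_space lborel {0..1})"
    and entropy: "(\<integral>\<^sup>+s. ennreal (xlogx_plus (norm (F s) / c)) \<partial>restrict_space lborel {0..1}) \<le> ennreal R"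
    and c: "0 < c" and R: "0 \<le> R" and m: "1 \<le> m"
    and I: "I \<in> sets lborel" "I \<subseteq> {a..b}" and ab: "0 \<le> a" "a \<le> b" "b \<le> 1"
  shows "(\<integral>\<^sup>+s. ennreal (norm (F s)) * indicator I s \<partial>lborel) \<le> ennreal (c * ((b - a) * exp m + R / m))"
proof -
  define \<psi> where "\<psi> s = ennreal (xlogx_plus (norm (F s) / c)) * indicator {0..1} s" for s
  have "(\<lambda>s. ennreal (xlogx_plus (norm (F s) / c))) \<in> borel_measurable (restrict_space lborel {0..1})"
    using meas by measurable
  then have [measurable]: "\<psi> \<in> borel_measurable lborel"
    unfolding \<psi>_def by (subst (asm) borel_measurable_restrict_space_iff_ennreal) auto
  have "ennreal (norm (F s)) * indicator I s \<le> ennreal (c * exp m) * indicator {a..b} s + ennreal (c / m) * \<psi> s"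
    for s
  proof (cases "s \<in> I")
    case True
    with I ab have s: "s \<in> {a..b}" "s \<in> {0..1}" by auto
    have "norm (F s) / c \<le> exp m + xlogx_plus (norm (F s) / c) / m"
      using c by (intro le_exp_plus_xlogx_plus[OF m]) simp
    then have "ennreal (norm (F s)) \<le> ennreal (c * exp m + c / m * xlogx_plus (norm (F s) / c))"
      using c by (intro ennreal_leI) (simp add: field_simps)
    also have "\<dots> = ennreal (c * exp m) + ennreal (c / m) * ennreal (xlogx_plus (norm (F s) / c))"
      using c m xlogx_plus_nonneg by (simp add: ennreal_plus ennreal_mult del: times_divide_eq_left)
    finally show ?thesis
      using s True by (simp add: \<psi>_def)
  qed simp
  then have "(\<integral>\<^sup>+s. ennreal (norm (F s)) * indicator I s \<partial>lborel)
      \<le> (\<integral>\<^sup>+s. ennreal (c * exp m) * indicator {a..b} s + ennreal (c / m) * \<psi> s \<partial>lborel)"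
    by (rule nn_integral_mono)
  also have "\<dots> = ennreal (c * exp m) * ennreal (b - a) + ennreal (c / m) * (\<integral>\<^sup>+s. \<psi> s \<partial>lborel)"
    using ab by (simp add: nn_integral_add nn_integral_cmult)
  also have "(\<integral>\<^sup>+s. \<psi> s \<partial>lborel) \<le> ennreal R"
    using entropy by (simp add: \<psi>_def nn_integral_restrict_space)
  also have "ennreal (c * exp m) * ennreal (b - a) + ennreal (c / m) * ennreal R
      = ennreal (c * exp m * (b - a) + c / m * R)"
    using c m R ab by (simp add: ennreal_plus ennreal_mult del: times_divide_eq_left)
  also have "c * exp m * (b - a) + c / m * R = c * ((b - a) * exp m + R / m)"
    by (simp add: algebra_simps)
  finally show ?thesis by (simp add: mult_left_mono)
qed

lemma set_integrable_of_entropy: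
  fixes F :: "real \<Rightarrow> 'a::{banach, second_countable_topology}"
  assumes meas: "F \<in> borel_measurable (restrict_space lborel {0..1})"
    and entropy: "(\<integral>\<^sup>+s. ennreal (xlogx_plus (norm (F s) / c)) \<partial>restrict_space lborel {0..1}) \<le> ennreal R"
    and c: "0 < c" and R: "0 \<le> R"
  shows "set_integrable lborel {0..1} F"
  unfolding set_integrable_def
proof (rule integrableI_bounded)
  show "(\<lambda>s. indicator {0..1} s *\<^sub>R F s) \<in> borel_measurable lborel"
    using meas by (subst (asm) borel_measurable_restrict_space_iff) auto
  have "(\<integral>\<^sup>+s. ennreal (norm (indicator {0..1} s *\<^sub>R F s)) \<partial>lborel)
      = (\<integral>\<^sup>+s. ennreal (norm (F s)) * indicator {0..1} s \<partial>lborel)"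
    by (intro nn_integral_cong) (simp add: indicator_def)
  also have "\<dots> \<le> ennreal (c * ((1 - 0) * exp 1 + R / 1))"
    by (rule nn_integral_norm_le_entropy[OF meas entropy c R]) auto
  also have "\<dots> < \<infinity>"
    by simp
  finally show "(\<integral>\<^sup>+s. ennreal (norm (indicator {0..1} s *\<^sub>R F s)) \<partial>lborel) < \<infinity>" .
qed

lemma norm_set_integral_le_entropy:
  fixes F :: "real \<Rightarrow> 'a::{banach, second_countable_topology}"
  assumes meas: "F \<in> borel_measurable (restrict_space lborel {0..1})"
    and entropy: "(\<integral>\<^sup>+s. ennreal (xlogx_plus (norm (F s) / c)) \<partial>restrict_space lborel {0..1}) \<le> ennreal R"
    and c: "0 < c" and R: "0 \<le> R" and m: "1 \<le> m"
    and I: "I \<in> sets lborel" "I \<subseteq> {a..b}" and ab: "0 \<le> a" "a \<le> b" "b \<le> 1"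
  shows "norm (LINT s:I|lborel. F s) \<le> c * ((b - a) * exp m + R / m)"
proof -
  have "set_integrable lborel I F"
    by (rule set_integrable_subset[OF set_integrable_of_entropy[OF meas entropy c R] I(1)])
      (use I ab in auto)
  then have "ennreal (norm (LINT s:I|lborel. F s)) \<le> (\<integral>\<^sup>+s. ennreal (norm (F s)) * indicator I s \<partial>lborel)"
    unfolding set_lebesgue_integral_def set_integrable_def
    by (auto intro!: order.trans[OF integral_norm_bound_ennreal] nn_integral_mono simp: indicator_def)
  also have "\<dots> \<le> ennreal (c * ((b - a) * exp m + R / m))"
    by (rule nn_integral_norm_le_entropy[OF meas entropy c R m I ab])
  finally show ?thesis
    using c R ab m by (subst (asm) ennreal_le_iff) auto
qed

lemma indefinite_integral_controlled:
  fixes F :: "real \<Rightarrow> real^'n^'n"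
  assumes meas: "F \<in> borel_measurable (restrict_space lborel {0..1})"
    and psd: "\<And>s. s \<in> {0..1} \<Longrightarrow> F s \<in> psd_set"
    and entropy: "(\<integral>\<^sup>+s. ennreal (xlogx_plus (norm (F s) / c)) \<partial>restrict_space lborel {0..1}) \<le> ennreal R"
    and c: "0 < c" and R: "0 \<le> R"
  shows "controlled_on {0..1} c R (c * (exp 1 + R)) (\<lambda>t. LINT s:{0..t}|lborel. F s)"
proof -
  note int = set_integrable_of_entropy[OF meas entropy c R]
  note norm_le = norm_set_integral_le_entropy[OF meas entropy c R]
  have increment: "norm ((LINT s:{0..y}|lborel. F s) - (LINT s:{0..x}|lborel. F s))
      \<le> c * ((y - x) * exp (Suc m) + R / Suc m)" if "0 \<le> x" "x \<le> y" "y \<le> 1" for x y m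
  proof -
    have "(LINT s:{0..y}|lborel. F s) = (LINT s:{0..x} \<union> {x<..y}|lborel. F s)"
      using that by (simp add: ivl_disj_un)
    also have "\<dots> = (LINT s:{0..x}|lborel. F s) + (LINT s:{x<..y}|lborel. F s)"
      using that by (intro set_integral_Un set_integrable_subset[OF int]) auto
    finally have "(LINT s:{0..y}|lborel. F s) - (LINT s:{0..x}|lborel. F s) = (LINT s:{x<..y}|lborel. F s)"
      by simp
    with that show ?thesis by (auto intro!: norm_le)
  qed
  show ?thesis
    unfolding controlled_on_def
  proof (intro conjI ballI allI)
    fix t :: real assume t: "t \<in> {0..1}"
    have "(\<lambda>s. indicator {0..t} s *\<^sub>R F s) s \<in> psd_set" for s
      using psd t by (simp add: indicator_def zero_psd)
    then show "(LINT s:{0..t}|lborel. F s) \<in> psd_set"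
      unfolding set_lebesgue_integral_def
      using set_integrable_subset[OF int, of "{0..t}"] t
      by (intro integral_psd) (auto simp: set_integrable_def)
    have "norm (LINT s:{0..t}|lborel. F s) \<le> c * ((t - 0) * exp 1 + R / 1)"
      using t by (intro norm_le) auto
    also have "\<dots> \<le> c * (exp 1 + R)"
      using t c by (intro mult_left_mono) auto
    finally show "norm (LINT s:{0..t}|lborel. F s) \<le> c * (exp 1 + R)" .
  next
    fix s t :: real and m assume "s \<in> {0..1}" "t \<in> {0..1}"
    then show "norm ((LINT s:{0..t}|lborel. F s) - (LINT s:{0..s}|lborel. F s))
        \<le> c * (\<bar>t - s\<bar> * exp (Suc m) + R / Suc m)"
      using increment[of s t m] increment[of t s m]
      by (cases "s \<le> t") (simp_all add: norm_minus_commute)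
  qed
qed

lemma indefinite_set_integral_continuous_on:
  fixes F :: "real \<Rightarrow> 'a::euclidean_space"
  assumes int: "set_integrable lborel {a..b} F"
  shows "continuous_on {a..b} (\<lambda>t. LINT s:{a..t}|lborel. F s)"
proof -
  have "continuous_on {a..b} (\<lambda>t. integral {a..t} F)"
    by (rule indefinite_integral_continuous_1[OF set_borel_integral_eq_integral(1)[OF int]])
  then show ?thesis
  proof (rule continuous_on_eq)
    show "integral {a..t} F = (LINT s:{a..t}|lborel. F s)" if "t \<in> {a..b}" for t
      using that by (intro set_borel_integral_eq_integral(2)[symmetric] set_integrable_subset[OF int]) auto
  qed
qed

lemma Rats_sequence_tendsto:
  fixes a b t :: real
  assumes "a < b" "t \<in> {a..b}"
  obtains q where "\<And>k. q k \<in> \<rat> \<inter> {a<..<b}" "q \<longlonglongrightarrow> t"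
proof -
  have "closure ({a<..<b} \<inter> \<rat>) = {a..b}"
    using assms(1) by (subst closure_open_Int_superset) (auto simp: Rats_closure_real)
  with assms(2) have "t \<in> closure ({a<..<b} \<inter> \<rat>)"
    by simp
  then obtain q where "\<forall>k. q k \<in> {a<..<b} \<inter> \<rat>" "q \<longlonglongrightarrow> t"
    unfolding closure_sequential by blast
  then show ?thesis
    by (intro that[of q]) auto
qed

text \<open>Where \<open>F\<close> is not integrable on \<open>[0, t]\<close> the Bochner integral is \<open>0\<close> from \<open>t\<close> on, so the
  indefinite integral need not be continuous; it is then approximated from the right instead.\<close>
lemma indefinite_set_integral_Rats_approx:
  fixes F :: "real \<Rightarrow> 'a::euclidean_space"
  assumes t: "t \<in> {0..1}"
  obtains q where "\<And>k. q k \<in> {0..1} \<inter> \<rat>" "q \<longlonglongrightarrow> t"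
    "(\<lambda>k. LINT s:{0..q k}|lborel. F s) \<longlonglongrightarrow> (LINT s:{0..t}|lborel. F s)"
proof (cases "t \<in> \<rat>")
  case True
  with t show ?thesis by (intro that[of "\<lambda>k. t"]) auto
next
  case False
  with t have "0 < t" "t < 1"
    using Rats_0 Rats_1 by (auto simp: less_le)
  show ?thesis
  proof (cases "set_integrable lborel {0..t} F")
    case True
    obtain q where q: "\<And>k. q k \<in> \<rat> \<inter> {0<..<t}" "q \<longlonglongrightarrow> t"
      using Rats_sequence_tendsto[OF \<open>0 < t\<close>, of t] \<open>0 < t\<close> by auto
    have "(\<lambda>k. LINT s:{0..q k}|lborel. F s) \<longlonglongrightarrow> (LINT s:{0..t}|lborel. F s)"
      using q \<open>0 < t\<close>
      by (intro continuous_on_tendsto_compose[OF indefinite_set_integral_continuous_on[OF True]])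
        (auto intro!: always_eventually less_imp_le)
    moreover have "q k \<in> {0..1} \<inter> \<rat>" for k
      using q(1)[of k] \<open>t < 1\<close> by auto
    ultimately show ?thesis
      using q(2) that by blast
  next
    case False
    obtain q where q: "\<And>k. q k \<in> \<rat> \<inter> {t<..<1}" "q \<longlonglongrightarrow> t"
      using Rats_sequence_tendsto[OF \<open>t < 1\<close>, of t] \<open>t < 1\<close> by auto
    have "\<not> set_integrable lborel {0..q k} F" for k
      using False q(1)[of k] set_integrable_subset[of lborel "{0..q k}" F "{0..t}"] by auto
    with False have "(LINT s:{0..q k}|lborel. F s) = (LINT s:{0..t}|lborel. F s)" for k
      by (simp add: set_lebesgue_integral_def set_integrable_def not_integrable_integral_eq)
    then have "(\<lambda>k. LINT s:{0..q k}|lborel. F s) \<longlonglongrightarrow> (LINT s:{0..t}|lborel. F s)"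
      by simp
    moreover have "q k \<in> {0..1} \<inter> \<rat>" for k
      using q(1)[of k] \<open>0 < t\<close> by auto
    ultimately show ?thesis
      using q(2) that by blast
  qed
qed

lemma controlled_on_indefinite_integral_iff_Rats:
  fixes F :: "real \<Rightarrow> real^'n^'n"
  shows "controlled_on {0..1} c R B (\<lambda>t. LINT s:{0..t}|lborel. F s) \<longleftrightarrow>
    controlled_on ({0..1} \<inter> \<rat>) c R B (\<lambda>t. LINT s:{0..t}|lborel. F s)"
    (is "controlled_on _ c R B ?A \<longleftrightarrow> _")
proof
  assume Rats: "controlled_on ({0..1} \<inter> \<rat>) c R B ?A"
  have "\<forall>t\<in>{0..1}. \<exists>q. (\<forall>k. q k \<in> {0..1} \<inter> \<rat>) \<and> q \<longlonglongrightarrow> t \<and> (\<lambda>k. ?A (q k)) \<longlonglongrightarrow> ?A t"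
  proof
    fix t :: real assume "t \<in> {0..1}"
    with indefinite_set_integral_Rats_approx[of t F]
    show "\<exists>q. (\<forall>k. q k \<in> {0..1} \<inter> \<rat>) \<and> q \<longlonglongrightarrow> t \<and> (\<lambda>k. ?A (q k)) \<longlonglongrightarrow> ?A t"
      by blast
  qed
  then obtain q where q: "\<forall>t\<in>{0..1}. (\<forall>k. q t k \<in> {0..1} \<inter> \<rat>) \<and> q t \<longlonglongrightarrow> t \<and>
      (\<lambda>k. ?A (q t k)) \<longlonglongrightarrow> ?A t"
    by (metis bchoice)
  show "controlled_on {0..1} c R B ?A"
    by (rule controlled_on_limit[where g="\<lambda>k. ?A" and u="\<lambda>k t. q t k", OF Rats]) (use q in auto)
qed (auto intro: controlled_on_subset)

section \<open>Tightness\<close>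

lemma space_in_P_with: "in_P_with P Sg \<Longrightarrow> space P = path_set"
  using sets_eq_imp_space_eq[of P Omega] by (simp add: in_P_with_def Omega_def space_measure_of_conv)

lemma in_P_with_measurable_joint:
  fixes Sg :: "real \<Rightarrow> (real \<Rightarrow> real^'d) \<Rightarrow> real^'d^'d"
  assumes "in_P_with P Sg"
  shows "(\<lambda>(s, \<omega>). Sg s \<omega>) \<in> borel_measurable (restrict_space lborel {0..1} \<Otimes>\<^sub>M P)"
proof -
  have "sets (Ffilt 1) = sets P"
    using assms by (simp add: in_P_with_def Ffilt_def Omega_def)
  then have "sets (restrict_space lborel {0..1} \<Otimes>\<^sub>M Ffilt 1) = sets (restrict_space lborel {0..1} \<Otimes>\<^sub>M P)"
    by (intro sets_pair_measure_cong) auto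
  then have "borel_measurable (restrict_space lborel {0..1} \<Otimes>\<^sub>M Ffilt 1)
      = (borel_measurable (restrict_space lborel {0..1} \<Otimes>\<^sub>M P) :: (real \<times> (real \<Rightarrow> real^'d) \<Rightarrow> real^'d^'d) set)"
    by (rule measurable_cong_sets[OF _ refl])
  moreover have "(\<lambda>(s, \<omega>). Sg s \<omega>) \<in> borel_measurable (restrict_space lborel {0..1} \<Otimes>\<^sub>M Ffilt 1)"
    using assms by (simp add: in_P_with_def)
  ultimately show ?thesis
    by simp
qed

lemma in_P_with_measurable_path:
  assumes "in_P_with P Sg" "\<omega> \<in> space P"
  shows "(\<lambda>s. Sg s \<omega>) \<in> borel_measurable (restrict_space lborel {0..1})"
  using measurable_compose[OF measurable_Pair2'[OF assms(2)] in_P_with_measurable_joint[OF assms(1)]]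
  by simp

lemma in_P_with_measurable_nn_integral:
  assumes "in_P_with P Sg" and f[measurable]: "f \<in> borel_measurable borel"
  shows "(\<lambda>\<omega>. \<integral>\<^sup>+s. f (Sg s \<omega>) \<partial>restrict_space lborel {0..1}) \<in> borel_measurable P"
proof (rule sigma_finite_measure.borel_measurable_nn_integral)
  show "sigma_finite_measure (restrict_space lborel {0..1::real})"
    by (rule sigma_finite_measure_restrict_space) (simp_all add: lborel.sigma_finite_measure_axioms)
  have "(\<lambda>(\<omega>, s). Sg s \<omega>) \<in> borel_measurable (P \<Otimes>\<^sub>M restrict_space lborel {0..1})"
    using in_P_with_measurable_joint[OF assms(1)]
    by (subst measurable_pair_swap_iff) (simp add: case_prod_beta)
  from measurable_compose[OF this f]
  show "(\<lambda>(\<omega>, s). f (Sg s \<omega>)) \<in> borel_measurable (P \<Otimes>\<^sub>M restrict_space lborel {0..1})"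
    by (simp add: case_prod_beta)
qed

lemma in_P_with_measurable_int_cov:
  assumes "in_P_with P Sg" "t \<in> {0..1}"
  shows "(\<lambda>\<omega>. int_cov Sg t \<omega>) \<in> borel_measurable P"
proof -
  have "int_cov Sg t \<omega> = (\<integral>s. indicator {0..t} s *\<^sub>R Sg s \<omega> \<partial>restrict_space lborel {0..1})" for \<omega>
  proof -
    have "(\<integral>s. indicator {0..t} s *\<^sub>R Sg s \<omega> \<partial>restrict_space lborel {0..1})
        = (LBINT s. indicator {0..1} s *\<^sub>R (indicator {0..t} s *\<^sub>R Sg s \<omega>))"
      by (subst integral_restrict_space) auto
    also have "(\<lambda>s. indicator {0..1} s *\<^sub>R (indicator {0..t} s *\<^sub>R Sg s \<omega>)) = (\<lambda>s. indicator {0..t} s *\<^sub>R Sg s \<omega>)"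
      using assms(2) by (auto simp: indicator_def)
    finally show ?thesis
      by (simp add: int_cov_def set_lebesgue_integral_def)
  qed
  moreover have "(\<lambda>\<omega>. \<integral>s. indicator {0..t} s *\<^sub>R Sg s \<omega> \<partial>restrict_space lborel {0..1}) \<in> borel_measurable P"
  proof (rule sigma_finite_measure.borel_measurable_lebesgue_integral)
    show "sigma_finite_measure (restrict_space lborel {0..1::real})"
      by (rule sigma_finite_measure_restrict_space) (simp_all add: lborel.sigma_finite_measure_axioms)
    have Sg: "(\<lambda>(\<omega>, s). Sg s \<omega>) \<in> borel_measurable (P \<Otimes>\<^sub>M restrict_space lborel {0..1})"
      using in_P_with_measurable_joint[OF assms(1)]
      by (subst measurable_pair_swap_iff) (simp add: case_prod_beta)
    have "(indicator {0..t} :: real \<Rightarrow> real) \<in> borel_measurable (restrict_space lborel {0..1})"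
      by (rule measurable_restrict_space1) simp
    from measurable_compose[OF measurable_snd[of P] this]
    have "(\<lambda>(\<omega>, s). indicator {0..t} s :: real) \<in> borel_measurable (P \<Otimes>\<^sub>M restrict_space lborel {0..1})"
      by (simp add: case_prod_beta)
    from borel_measurable_scaleR[OF this Sg]
    show "(\<lambda>(\<omega>, s). indicator {0..t} s *\<^sub>R Sg s \<omega>) \<in> borel_measurable (P \<Otimes>\<^sub>M restrict_space lborel {0..1})"
      by (simp add: case_prod_beta)
  qed
  ultimately show ?thesis
    by simp
qed

lemma sets_controlled_int_cov:
  assumes "in_P_with P Sg"
  shows "{\<omega> \<in> space P. controlled_on {0..1} c R B (\<lambda>t. int_cov Sg t \<omega>)} \<in> sets P"
proof -
  let ?Q = "{0..1} \<inter> \<rat> :: real set"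
  have "{\<omega> \<in> space P. controlled_on {0..1} c R B (\<lambda>t. int_cov Sg t \<omega>)}
      = {\<omega> \<in> space P. controlled_on ?Q c R B (\<lambda>t. int_cov Sg t \<omega>)}"
    unfolding int_cov_def by (simp only: controlled_on_indefinite_integral_iff_Rats)
  also have "\<dots> \<in> sets P"
    unfolding controlled_on_def
  proof (intro sets.sets_Collect_conj sets.sets_Collect_countable_All' sets.sets_Collect_countable_All)
    fix s t m assume "s \<in> ?Q" "t \<in> ?Q"
    then have [measurable]: "(\<lambda>\<omega>. int_cov Sg s \<omega>) \<in> borel_measurable P"
        "(\<lambda>\<omega>. int_cov Sg t \<omega>) \<in> borel_measurable P"
      using in_P_with_measurable_int_cov[OF assms] by auto
    show "{\<omega> \<in> space P. norm (int_cov Sg t \<omega> - int_cov Sg s \<omega>) \<le> c * (\<bar>t - s\<bar> * exp (Suc m) + R / Suc m)} \<in> sets P"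
      by measurable
  next
    fix t assume "t \<in> ?Q"
    then have [measurable]: "(\<lambda>\<omega>. int_cov Sg t \<omega>) \<in> borel_measurable P"
      using in_P_with_measurable_int_cov[OF assms] by auto
    show "{\<omega> \<in> space P. norm (int_cov Sg t \<omega>) \<le> B} \<in> sets P"
      by measurable
    have [measurable]: "psd_set \<in> sets borel"
      by (rule borel_closed[OF closed_psd])
    show "{\<omega> \<in> space P. int_cov Sg t \<omega> \<in> psd_set} \<in> sets P"
      by measurable
  qed (simp_all add: countable_Int2 countable_rat)
  finally show ?thesis .
qed

lemma (in finite_measure) measure_nn_integral_Markov:
  assumes [measurable]: "f \<in> borel_measurable M"
    and int: "(\<integral>\<^sup>+x. f x \<partial>M) \<le> ennreal S" and R: "0 < R" and S: "0 \<le> S"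
  shows "measure M {x \<in> space M. ennreal R < f x} \<le> S / R"
proof -
  have "{x \<in> space M. ennreal R < f x} \<subseteq> {x \<in> space M. 1 \<le> ennreal (1 / R) * f x}"
  proof safe
    fix x assume "ennreal R < f x"
    then have "ennreal (1 / R) * ennreal R \<le> ennreal (1 / R) * f x"
      by (intro mult_left_mono) auto
    with R show "1 \<le> ennreal (1 / R) * f x"
      by (simp add: ennreal_mult[symmetric])
  qed
  then have "emeasure M {x \<in> space M. ennreal R < f x} \<le> emeasure M {x \<in> space M. 1 \<le> ennreal (1 / R) * f x}"
    by (intro emeasure_mono) measurable
  also have "\<dots> \<le> ennreal (1 / R) * (\<integral>\<^sup>+x. f x * indicator (space M) x \<partial>M)"
    by (rule nn_integral_Markov_inequality) auto
  also have "(\<integral>\<^sup>+x. f x * indicator (space M) x \<partial>M) = (\<integral>\<^sup>+x. f x \<partial>M)"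
    by (rule nn_integral_cong) simp
  also have "\<dots> \<le> ennreal S"
    by (rule int)
  also have "ennreal (1 / R) * ennreal S = ennreal (S / R)"
    using R S by (simp add: ennreal_mult[symmetric])
  finally show ?thesis
    using R S by (simp add: emeasure_eq_measure mult_left_mono ennreal_le_iff)
qed

lemma prob_int_cov_controlled:
  assumes inP: "in_P_with P Sg" and c: "0 < c" and R: "0 < R" and S: "0 \<le> S"
    and entropy: "(\<integral>\<^sup>+\<omega>. (\<integral>\<^sup>+s. ennreal (xlogx_plus (norm (Sg s \<omega>) / c)) \<partial>restrict_space lborel {0..1}) \<partial>P)
      \<le> ennreal S"
  shows "1 - S / R \<le> measure P
    {\<omega> \<in> space P. restrict (\<lambda>t. int_cov Sg t \<omega>) {0..1} \<in> controlled_paths c R (c * (exp 1 + R))}"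
proof -
  interpret prob_space P
    using inP by (simp add: in_P_with_def)
  define \<Phi> where "\<Phi> \<omega> = (\<integral>\<^sup>+s. ennreal (xlogx_plus (norm (Sg s \<omega>) / c)) \<partial>restrict_space lborel {0..1})" for \<omega>
  define Good where "Good = {\<omega> \<in> space P. controlled_on {0..1} c R (c * (exp 1 + R)) (\<lambda>t. int_cov Sg t \<omega>)}"
  define Bad where "Bad = {\<omega> \<in> space P. ennreal R < \<Phi> \<omega>}"
  have \<Phi>_meas[measurable]: "\<Phi> \<in> borel_measurable P"
    unfolding \<Phi>_def by (rule in_P_with_measurable_nn_integral[OF inP]) measurable
  have "measure P Bad \<le> S / R"
    unfolding Bad_def
    by (rule measure_nn_integral_Markov[OF \<Phi>_meas]) (use entropy R S in \<open>simp_all add: \<Phi>_def\<close>)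
  moreover have "space P - Bad \<subseteq> Good"
  proof
    fix \<omega> assume "\<omega> \<in> space P - Bad"
    then have \<omega>: "\<omega> \<in> space P" and "\<Phi> \<omega> \<le> ennreal R"
      by (auto simp: Bad_def not_less)
    moreover have "Sg s \<omega> \<in> psd_set" if "s \<in> {0..1}" for s
      using inP \<omega> that space_in_P_with[OF inP] by (simp add: in_P_with_def)
    ultimately show "\<omega> \<in> Good"
      using indefinite_integral_controlled[OF in_P_with_measurable_path[OF inP \<omega>]] c R
      by (simp add: Good_def \<Phi>_def int_cov_def[abs_def])
  qed
  moreover have "Bad \<in> sets P" "Good \<in> sets P"
    unfolding Good_def using sets_controlled_int_cov[OF inP] by (auto simp: Bad_def)
  ultimately have "1 - S / R \<le> measure P Good"
    using prob_compl[of Bad] finite_measure_mono[of "space P - Bad" Good] by auto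
  also have "Good = {\<omega> \<in> space P. restrict (\<lambda>t. int_cov Sg t \<omega>) {0..1} \<in> controlled_paths c R (c * (exp 1 + R))}"
    by (simp add: Good_def controlled_paths_def controlled_on_restrict)
  finally show ?thesis .
qed

lemma psd_norm_le_lambda1:
  fixes Sbar2 :: "real \<Rightarrow> real^'d \<Rightarrow> real^'d^'d" and M :: real
  assumes "Sbar2 t (\<omega> t) \<in> pd_set" "\<And>v. v \<bullet> (Sbar2 t (\<omega> t) *v v) \<le> M * (v \<bullet> v)" "0 < M"
    and "Sg t \<omega> \<in> psd_set"
  shows "norm (Sg t \<omega>) \<le> CARD('d)^2 * M * lambda1 Sbar2 Sg t \<omega>"
  using psd_norm_le_trace_pd_inverse[OF assms] by (simp add: lambda1_def power2_eq_square)

lemma nn_integral_xlogx_plus_le_entropy: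
  fixes Sbar2 :: "real \<Rightarrow> real^'d \<Rightarrow> real^'d^'d" and M :: real
  assumes inP: "in_P_with P Sg" and pd: "\<forall>t\<in>{0..1}. \<forall>x. Sbar2 t x \<in> pd_set"
    and le_M: "\<forall>t\<in>{0..1}. \<forall>x v. v \<bullet> (Sbar2 t x *v v) \<le> M * (v \<bullet> v)" and M: "0 < M"
  defines "c \<equiv> CARD('d)^2 * M"
  shows "(\<integral>\<^sup>+\<omega>. (\<integral>\<^sup>+s. ennreal (xlogx_plus (norm (Sg s \<omega>) / c)) \<partial>restrict_space lborel {0..1}) \<partial>P)
    \<le> (\<integral>\<^sup>+\<omega>. (\<integral>\<^sup>+t. indicator {0..1} t * ennreal (xlogx (lambda1 Sbar2 Sg t \<omega>) + exp (-1)) \<partial>lborel) \<partial>P)"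
proof (intro nn_integral_mono)
  fix \<omega> assume "\<omega> \<in> space P"
  then have \<omega>: "\<omega> \<in> path_set"
    using space_in_P_with[OF inP] by simp
  have "xlogx_plus (norm (Sg t \<omega>) / c) \<le> xlogx (lambda1 Sbar2 Sg t \<omega>) + exp (-1)" if t: "t \<in> {0..1}" for t
  proof -
    have "Sg t \<omega> \<in> psd_set"
      using inP t \<omega> by (simp add: in_P_with_def)
    with pd le_M M t have "norm (Sg t \<omega>) \<le> c * lambda1 Sbar2 Sg t \<omega>"
      unfolding c_def by (intro psd_norm_le_lambda1) auto
    with M have "norm (Sg t \<omega>) / c \<le> lambda1 Sbar2 Sg t \<omega>"
      by (simp add: c_def pos_divide_le_eq mult.commute)
    then have "xlogx_plus (norm (Sg t \<omega>) / c) \<le> xlogx_plus (lambda1 Sbar2 Sg t \<omega>)"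
      using M by (intro xlogx_plus_mono) (simp_all add: c_def)
    also have "\<dots> \<le> xlogx (lambda1 Sbar2 Sg t \<omega>) + exp (-1)"
      using \<open>norm (Sg t \<omega>) / c \<le> _\<close> M
      by (intro xlogx_plus_le order.trans[OF _ \<open>norm (Sg t \<omega>) / c \<le> _\<close>]) (simp add: c_def)
    finally show ?thesis .
  qed
  then show "(\<integral>\<^sup>+s. ennreal (xlogx_plus (norm (Sg s \<omega>) / c)) \<partial>restrict_space lborel {0..1})
      \<le> (\<integral>\<^sup>+t. indicator {0..1} t * ennreal (xlogx (lambda1 Sbar2 Sg t \<omega>) + exp (-1)) \<partial>lborel)"
    by (auto simp: nn_integral_restrict_space indicator_def intro!: nn_integral_mono ennreal_leI)
qed

theorem mainTheorem14:
  fixes Sbar2 :: "real \<Rightarrow> real^'d \<Rightarrow> real^'d^'d"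
    and lambda2 :: "real \<Rightarrow> real^'d \<Rightarrow> real"
    and P :: "nat \<Rightarrow> (real \<Rightarrow> real^'d) measure"
    and Sig :: "nat \<Rightarrow> real \<Rightarrow> (real \<Rightarrow> real^'d) \<Rightarrow> real^'d^'d"
    and b_lo b_hi M :: real
  assumes Sbar2_pd: "\<forall>t\<in>{0..1}. \<forall>x. Sbar2 t x \<in> pd_set"
    and Sbar2_meas: "(\<lambda>(t, x). Sbar2 t x) \<in> borel_measurable borel"
    and lambda2_cont: "continuous_on ({0..1} \<times> UNIV) (\<lambda>(t, x). lambda2 t x)"
    and R_b: "0 < b_lo" "b_lo \<le> b_hi"
    and R_lambda2: "\<forall>t\<in>{0..1}. \<forall>x. b_lo \<le> lambda2 t x \<and> lambda2 t x \<le> b_hi"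
    and R_M: "0 < M" "\<forall>t\<in>{0..1}. \<forall>x v. v \<bullet> (Sbar2 t x *v v) \<le> M * (v \<bullet> v)"
    and inP: "\<forall>n. in_P_with (P n) (Sig n)"
    and entropy: "(SUP n. \<integral>\<^sup>+ \<omega>. (\<integral>\<^sup>+ t. indicator {0..1} t *
                     ennreal (xlogx (lambda1 Sbar2 (Sig n) t \<omega>) + exp (-1)) \<partial>lborel) \<partial>(P n)) < \<top>"
  shows "\<forall>\<epsilon>>0. \<exists>K. compactin (mtopology_of CS_metric) K \<and>
           (\<forall>n. 1 - \<epsilon> \<le> measure (P n)
                 {\<omega> \<in> space (P n). restrict (\<lambda>t. int_cov (Sig n) t \<omega>) {0..1} \<in> K})"
proof (intro allI impI)
  fix \<epsilon> :: real assume "0 < \<epsilon>"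
  define c where "c = CARD('d)^2 * M"
  define H where "H n = (\<integral>\<^sup>+\<omega>. (\<integral>\<^sup>+t. indicator {0..1} t *
    ennreal (xlogx (lambda1 Sbar2 (Sig n) t \<omega>) + exp (-1)) \<partial>lborel) \<partial>P n)" for n
  define S where "S = enn2real (SUP n. H n)"
  define R where "R = S / \<epsilon> + 1"
  have "0 < c" "0 \<le> S" "0 < R"
    using R_M(1) \<open>0 < \<epsilon>\<close> by (simp_all add: c_def S_def R_def add_nonneg_pos)
  have "S / R \<le> \<epsilon>"
    using \<open>0 < \<epsilon>\<close> \<open>0 \<le> S\<close> \<open>0 < R\<close> by (simp add: pos_divide_le_eq R_def field_simps)
  have "H n \<le> ennreal S" for n
    using entropy SUP_upper[of n UNIV H] by (simp add: S_def H_def less_top)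
  show "\<exists>K. compactin (mtopology_of CS_metric) K \<and>
      (\<forall>n. 1 - \<epsilon> \<le> measure (P n) {\<omega> \<in> space (P n). restrict (\<lambda>t. int_cov (Sig n) t \<omega>) {0..1} \<in> K})"
  proof (intro exI conjI allI)
    show "compactin (mtopology_of CS_metric) (controlled_paths c R (c * (exp 1 + R)))"
      by (rule compactin_controlled_paths[OF \<open>0 < c\<close>])
    fix n
    have "(\<integral>\<^sup>+\<omega>. (\<integral>\<^sup>+s. ennreal (xlogx_plus (norm (Sig n s \<omega>) / c)) \<partial>restrict_space lborel {0..1}) \<partial>P n)
        \<le> ennreal S"
      using nn_integral_xlogx_plus_le_entropy[OF inP[rule_format] Sbar2_pd R_M(2) R_M(1)] \<open>H n \<le> ennreal S\<close>
      unfolding c_def H_def by (rule order.trans)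
    from prob_int_cov_controlled[OF inP[rule_format] \<open>0 < c\<close> \<open>0 < R\<close> \<open>0 \<le> S\<close> this] \<open>S / R \<le> \<epsilon>\<close>
    show "1 - \<epsilon> \<le> measure (P n)
        {\<omega> \<in> space (P n). restrict (\<lambda>t. int_cov (Sig n) t \<omega>) {0..1} \<in> controlled_paths c R (c * (exp 1 + R))}"
      by linarith
  qed
qed

end
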